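(* In the standing setting below, assume $c$ satisfies Loeper's property and let $\phi:\mathbb{X}\to\mathbb{R}$ be alternative $c$-convex. Fix $y\in\mathbb{Y}$, $h\in\mathbb{R}$ and let $f(x)=-c(x,y)+h$ and $S=\{x\in\mathbb{X}:\phi(x)\le f(x)\}$. Then $S$ is $c$-convex with respect to $y$, i.e. $\{-D_yc(x,y):x\in S\}$ is convex. Moreover, if $\phi(x')<f(x')$ for some $x'\in\mathbb{X}$, then $S$ has non-empty interior and the interior of $S$ is contained in $\{x\in\mathbb{X}:\phi(x)<f(x)\}$.
   Context: Standing setting: $\mathbb{X},\mathbb{Y}\subset\mathbb{R}^n$ are compact with non-empty interior; $c:\mathbb{X}\times\mathbb{Y}\to\mathbb{R}$ has continuous $D_xc$, $D_yc$, and continuous mixed second derivatives with $D^2_{xy}c=(D^2_{yx}c)^T$; for each $x$ the map $y\mapsto -D_xc(x,y)$ is injective on $\mathbb{Y}$ and for each $y$ the map $x\mapsto -D_yc(x,y)$ is injective on $\mathbb{X}$; $D^2_{xy}c(x,y)$ is invertible everywhere; for every $y$ the set $[\mathbb{X}]_y=\{-D_yc(x,y):x\in\mathbb{X}\}$ is convex and for every $x$ the set $\{-D_xc(x,y):y\in\mathbb{Y}\}$ is convex. $\exp^c_y:[\mathbb{X}]_y\to\mathbb{X}$ is the inverse of $x\mapsto -D_yc(x,y)$; the $c$-segment with respect to $y$ from $x_0$ to $x_1$ is $\{\exp^c_y(tp_1+(1-t)p_0):t\in[0,1]\}$ with $p_i=-D_yc(x_i,y)$. Loeper's property: for all $x_0,x_1\in\mathbb{X}$,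 $y_0,y\in\mathbb{Y}$ and every $x_t$ on the $c$-segment with respect to $y_0$ from $x_0$ to $x_1$, $-c(x_t,y)+c(x_t,y_0)\le\max\{-c(x_i,y)+c(x_i,y_0):i=0,1\}$. $c$-chord: for $X_i=(x_i,u_i)\in\mathbb{X}\times\mathbb{R}$, $F_{X_0X_1}(x)=\sup\{-c(x,y)+h: y\in\mathbb{Y},h\in\mathbb{R},-c(x_i,y)+h\le u_i, i=0,1\}$. $\phi$ is alternative $c$-convex if for all $x_0,x_1\in\mathbb{X}$, with $X_i=(x_i,\phi(x_i))$, $\phi(x)\le F_{X_0X_1}(x)$ for all $x\in\mathbb{X}$. Interior is taken in $\mathbb{R}^n$. *)

theory Defs
  imports "HOL-Analysis.Analysis"
begin

definition standing_setting ::
  "(real^'n) set \<Rightarrow> (real^'n) set \<Rightarrow> (real^'n \<Rightarrow> real^'n \<Rightarrow> real)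
   \<Rightarrow> (real^'n \<Rightarrow> real^'n \<Rightarrow> real^'n) \<Rightarrow> (real^'n \<Rightarrow> real^'n \<Rightarrow> real^'n)
   \<Rightarrow> (real^'n \<Rightarrow> real^'n \<Rightarrow> real^'n^'n) \<Rightarrow> (real^'n \<Rightarrow> real^'n \<Rightarrow> real^'n^'n) \<Rightarrow> bool" where
  "standing_setting X Y c Dxc Dyc Dxy Dyx \<longleftrightarrow>
     compact X \<and> compact Y \<and> interior X \<noteq> {} \<and> interior Y \<noteq> {} \<and>
     (\<forall>x\<in>X. \<forall>y\<in>Y. ((\<lambda>x'. c x' y) has_derivative (\<lambda>v. Dxc x y \<bullet> v)) (at x within X)) \<and>
     (\<forall>x\<in>X. \<forall>y\<in>Y. ((\<lambda>y'. c x y') has_derivative (\<lambda>v. Dyc x y \<bullet> v)) (at y within Y)) \<and>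
     continuous_on (X \<times> Y) (\<lambda>(x,y). Dxc x y) \<and>
     continuous_on (X \<times> Y) (\<lambda>(x,y). Dyc x y) \<and>
     (\<forall>x\<in>X. \<forall>y\<in>Y. ((\<lambda>y'. Dxc x y') has_derivative (\<lambda>v. Dxy x y *v v)) (at y within Y)) \<and>
     (\<forall>x\<in>X. \<forall>y\<in>Y. ((\<lambda>x'. Dyc x' y) has_derivative (\<lambda>v. Dyx x y *v v)) (at x within X)) \<and>
     continuous_on (X \<times> Y) (\<lambda>(x,y). Dxy x y) \<and>
     continuous_on (X \<times> Y) (\<lambda>(x,y). Dyx x y) \<and>
     (\<forall>x\<in>X. \<forall>y\<in>Y. Dxy x y = transpose (Dyx x y)) \<and>
     (\<forall>x\<in>X. inj_on (\<lambda>y. - Dxc x y) Y) \<and>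
     (\<forall>y\<in>Y. inj_on (\<lambda>x. - Dyc x y) X) \<and>
     (\<forall>x\<in>X. \<forall>y\<in>Y. invertible (Dxy x y)) \<and>
     (\<forall>y\<in>Y. convex ((\<lambda>x. - Dyc x y) ` X)) \<and>
     (\<forall>x\<in>X. convex ((\<lambda>y. - Dxc x y) ` Y))"

definition cexp :: "(real^'n) set \<Rightarrow> (real^'n \<Rightarrow> real^'n \<Rightarrow> real^'n) \<Rightarrow> real^'n \<Rightarrow> real^'n \<Rightarrow> real^'n" where
  "cexp X Dyc y p = inv_into X (\<lambda>x. - Dyc x y) p"

definition c_segment :: "(real^'n) set \<Rightarrow> (real^'n \<Rightarrow> real^'n \<Rightarrow> real^'n) \<Rightarrow> real^'n \<Rightarrow> real^'n \<Rightarrow> real^'n \<Rightarrow> (real^'n) set" where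
  "c_segment X Dyc y x0 x1 =
     {cexp X Dyc y (t *\<^sub>R (- Dyc x1 y) + (1 - t) *\<^sub>R (- Dyc x0 y)) | t. t \<in> {0..1}}"

definition loeper :: "(real^'n) set \<Rightarrow> (real^'n) set \<Rightarrow> (real^'n \<Rightarrow> real^'n \<Rightarrow> real)
   \<Rightarrow> (real^'n \<Rightarrow> real^'n \<Rightarrow> real^'n) \<Rightarrow> bool" where
  "loeper X Y c Dyc \<longleftrightarrow>
     (\<forall>x0\<in>X. \<forall>x1\<in>X. \<forall>y0\<in>Y. \<forall>y\<in>Y. \<forall>xt\<in>c_segment X Dyc y0 x0 x1.
        - c xt y + c xt y0 \<le> max (- c x0 y + c x0 y0) (- c x1 y + c x1 y0))"

definition c_chord :: "(real^'n) set \<Rightarrow> (real^'n \<Rightarrow> real^'n \<Rightarrow> real)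
   \<Rightarrow> real^'n \<Rightarrow> real \<Rightarrow> real^'n \<Rightarrow> real \<Rightarrow> real^'n \<Rightarrow> real" where
  "c_chord Y c x0 u0 x1 u1 x =
     Sup {- c x y + h | y h. y \<in> Y \<and> - c x0 y + h \<le> u0 \<and> - c x1 y + h \<le> u1}"

definition alt_c_convex :: "(real^'n) set \<Rightarrow> (real^'n) set \<Rightarrow> (real^'n \<Rightarrow> real^'n \<Rightarrow> real)
   \<Rightarrow> (real^'n \<Rightarrow> real) \<Rightarrow> bool" where
  "alt_c_convex X Y c \<phi> \<longleftrightarrow>
     (\<forall>x0\<in>X. \<forall>x1\<in>X. \<forall>x\<in>X. \<phi> x \<le> c_chord Y c x0 (\<phi> x0) x1 (\<phi> x1) x)"

end

(* In the chart q = -D_y c(x,y) the c-segments with respect to y are straight, so Loeper's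
   property turns the chord inequality of an alternative c-convex phi into convexity of the
   chart image of S.  Taking x0 = x1 = x' in the chord inequality bounds phi near x' by phi(x')
   plus a Lipschitz modulus of c in the chart, so phi < f on an open set.  Finally, if
   phi(x) = f(x) at an interior point x of S, put x inside a c-segment from a point x2 with
   phi(x2) < f(x2) to some z in S.  The chord inequality at x is attained at some ys, and
   Loeper's property makes x a local maximum of -c(.,ys) + c(.,y); hence
   D_x c(x,ys) = D_x c(x,y), so ys = y, which contradicts phi(x2) < f(x2). *)
theory Submission
  imports Defs
begin

lemma image_interior_subset_interior_image:
  fixes f :: "'a::euclidean_space \<Rightarrow> 'a"
  assumes "continuous_on S f" "inj_on f S"
  shows "f ` interior S \<subseteq> interior (f ` S)"
proof -
  have "open (f ` interior S)"
    using continuous_on_subset[OF assms(1) interior_subset] inj_on_subset[OF assms(2) interior_subset]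
    by (intro invariance_of_domain) auto
  then show ?thesis
    by (simp add: image_mono interior_maximal interior_subset)
qed

lemma invertible_matrices_bounded_below:
  fixes A :: "'a::topological_space \<Rightarrow> real^'n^'n"
  assumes "compact S" "continuous_on S A" "\<And>x. x \<in> S \<Longrightarrow> invertible (A x)"
  obtains m where "m > 0" "\<And>x v. x \<in> S \<Longrightarrow> m * norm v \<le> norm (A x *v v)"
proof (cases "S = {}")
  case True
  then show ?thesis by (intro that[of 1]) auto
next
  case False
  let ?F = "\<lambda>p. norm (A (fst p) *v snd p)"
  have "continuous_on (S \<times> sphere 0 1) (\<lambda>p. A (fst p))"
    by (rule continuous_on_compose2[OF assms(2)]) (auto intro!: continuous_intros)
  then have "continuous_on (S \<times> sphere 0 1) ?F"
    by (auto simp: matrix_vector_mult_def intro!: continuous_intros)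
  moreover have "compact (S \<times> sphere (0::real^'n) 1)" "S \<times> sphere (0::real^'n) 1 \<noteq> {}"
    using assms(1) False by (auto intro: compact_Times)
  ultimately obtain x0 v0 where x0: "x0 \<in> S" and v0: "norm v0 = 1"
    and least: "\<And>x v. x \<in> S \<Longrightarrow> norm v = 1 \<Longrightarrow> ?F (x0, v0) \<le> ?F (x, v)"
    using continuous_attains_inf[of "S \<times> sphere 0 1" ?F] by fastforce
  show ?thesis
  proof
    have "A x0 *v v0 \<noteq> 0"
      using assms(3)[OF x0] v0 matrix_left_invertible_ker[of "A x0"]
      unfolding invertible_def by auto
    then show "?F (x0, v0) > 0" by simp
  next
    fix x v assume x: "x \<in> S"
    show "?F (x0, v0) * norm v \<le> norm (A x *v v)"
    proof (cases "v = 0")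
      case False
      have "?F (x0, v0) \<le> norm (A x *v (v /\<^sub>R norm v))"
        using least[OF x, of "v /\<^sub>R norm v"] False by simp
      also have "\<dots> = norm (A x *v v) / norm v"
        by (simp add: matrix_vector_mult_scaleR divide_inverse_commute)
      finally show ?thesis using False by (simp add: field_simps)
    qed simp
  qed
qed

lemma interior_point_convex_combination:
  fixes p q :: "'a::real_normed_vector"
  assumes "p \<in> interior A"
  obtains t qz where "0 < t" "t < 1" "qz \<in> A" "p = t *\<^sub>R q + (1 - t) *\<^sub>R qz"
proof -
  obtain r where "r > 0" and r: "ball p r \<subseteq> A"
    using assms mem_interior by blast
  define \<epsilon> where "\<epsilon> = r / (norm (p - q) + 1)"
  have "\<epsilon> > 0" using \<open>r > 0\<close> by (simp add: \<epsilon>_def add_nonneg_pos)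
  have "norm (p - q) + 1 > 0" by (simp add: add_nonneg_pos)
  then have "\<epsilon> * norm (p - q) < r"
    using \<open>r > 0\<close> by (simp add: \<epsilon>_def field_simps)
  show ?thesis
  proof (rule that[of "\<epsilon> / (1 + \<epsilon>)"])
    show "0 < \<epsilon> / (1 + \<epsilon>)" "\<epsilon> / (1 + \<epsilon>) < 1"
      using \<open>\<epsilon> > 0\<close> by auto
    show "p + \<epsilon> *\<^sub>R (p - q) \<in> A"
      using r \<open>\<epsilon> * norm (p - q) < r\<close> \<open>\<epsilon> > 0\<close> by (auto simp: dist_norm)
    show "p = (\<epsilon> / (1 + \<epsilon>)) *\<^sub>R q + (1 - \<epsilon> / (1 + \<epsilon>)) *\<^sub>R (p + \<epsilon> *\<^sub>R (p - q))"
      using \<open>\<epsilon> > 0\<close> by (simp add: field_simps scaleR_add_right algebra_simps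
          flip: scaleR_add_left diff_divide_distrib)
  qed
qed

lemma ball_subset_image_homothety:
  fixes q qz :: "'a::real_normed_vector"
  assumes "0 < t"
  shows "ball (t *\<^sub>R q + (1 - t) *\<^sub>R qz) (t * r) \<subseteq> (\<lambda>a. t *\<^sub>R a + (1 - t) *\<^sub>R qz) ` ball q r"
proof
  fix w assume w: "w \<in> ball (t *\<^sub>R q + (1 - t) *\<^sub>R qz) (t * r)"
  define a where "a = q + (1 / t) *\<^sub>R (w - (t *\<^sub>R q + (1 - t) *\<^sub>R qz))"
  have "dist q a = dist w (t *\<^sub>R q + (1 - t) *\<^sub>R qz) / t"
    using assms by (simp add: a_def dist_norm)
  then have "dist q a < r"
    using w assms by (simp add: dist_commute divide_less_eq mult.commute)
  moreover have "w = t *\<^sub>R a + (1 - t) *\<^sub>R qz"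
    using assms by (simp add: a_def algebra_simps)
  ultimately show "w \<in> (\<lambda>a. t *\<^sub>R a + (1 - t) *\<^sub>R qz) ` ball q r" by auto
qed

(* For a fixed y' the largest admissible h in the c-chord is the minimum below. *)
lemma alt_c_convex_le:
  assumes "alt_c_convex X Y c \<phi>" "x0 \<in> X" "x1 \<in> X" "x \<in> X" "Y \<noteq> {}"
    and bound: "\<And>y'. y' \<in> Y \<Longrightarrow> - c x y' + min (\<phi> x0 + c x0 y') (\<phi> x1 + c x1 y') \<le> B"
  shows "\<phi> x \<le> B"
proof -
  let ?A = "{- c x y' + h' |y' h'. y' \<in> Y \<and> - c x0 y' + h' \<le> \<phi> x0 \<and> - c x1 y' + h' \<le> \<phi> x1}"
  have "\<phi> x \<le> c_chord Y c x0 (\<phi> x0) x1 (\<phi> x1) x"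
    using assms(1-4) unfolding alt_c_convex_def by blast
  also have "\<dots> = Sup ?A"
    unfolding c_chord_def ..
  also have "\<dots> \<le> B"
  proof (rule cSup_least)
    obtain y' where "y' \<in> Y" using \<open>Y \<noteq> {}\<close> by blast
    then show "?A \<noteq> {}"
      by (intro ex_in_conv[THEN iffD1] exI[of _ "- c x y' + min (\<phi> x0 + c x0 y') (\<phi> x1 + c x1 y')"])
        (auto intro!: exI[of _ y'])
  next
    fix v assume "v \<in> ?A"
    then obtain y' h' where "v = - c x y' + h'" "y' \<in> Y"
      and "h' \<le> min (\<phi> x0 + c x0 y') (\<phi> x1 + c x1 y')" by auto
    then show "v \<le> B" using bound[of y'] by linarith
  qed
  finally show ?thesis .
qed

locale cost_chart =
  fixes X Y :: "(real^'n) set" and c :: "real^'n \<Rightarrow> real^'n \<Rightarrow> real"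
    and Dxc Dyc :: "real^'n \<Rightarrow> real^'n \<Rightarrow> real^'n"
    and Dxy Dyx :: "real^'n \<Rightarrow> real^'n \<Rightarrow> real^'n^'n"
    and y :: "real^'n"
  assumes standing: "standing_setting X Y c Dxc Dyc Dxy Dyx"
    and y_in_Y: "y \<in> Y"
begin

abbreviation coord :: "real^'n \<Rightarrow> real^'n" where "coord x \<equiv> - Dyc x y"

abbreviation Xy :: "(real^'n) set" where "Xy \<equiv> coord ` X"

abbreviation expc :: "real^'n \<Rightarrow> real^'n" where "expc \<equiv> cexp X Dyc y"

lemma compact_X: "compact X"
  and compact_Y: "compact Y"
  and interior_X_nonempty: "interior X \<noteq> {}"
  and inj_coord: "inj_on coord X"
  and convex_Xy: "convex Xy"
  and has_derivative_c:
    "x \<in> X \<Longrightarrow> y' \<in> Y \<Longrightarrow> ((\<lambda>x'. c x' y') has_derivative (\<lambda>v. Dxc x y' \<bullet> v)) (at x within X)"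
  using standing y_in_Y unfolding standing_setting_def by auto

lemma inj_Dxc:
  assumes "x \<in> X"
  shows "inj_on (Dxc x) Y"
proof -
  have "inj_on (\<lambda>y'. - Dxc x y') Y"
    using standing assms unfolding standing_setting_def by blast
  then show ?thesis by (simp add: inj_on_def)
qed

lemma has_derivative_coord:
  assumes "x \<in> X"
  shows "(coord has_derivative (\<lambda>v. - (Dyx x y *v v))) (at x within X)"
proof -
  have "((\<lambda>x'. Dyc x' y) has_derivative (\<lambda>v. Dyx x y *v v)) (at x within X)"
    using standing assms y_in_Y unfolding standing_setting_def by blast
  then show ?thesis by (rule has_derivative_minus)
qed

lemma continuous_c_left: "y' \<in> Y \<Longrightarrow> continuous_on X (\<lambda>x. c x y')"
  and continuous_c_right: "x \<in> X \<Longrightarrow> continuous_on Y (c x)"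
  using standing unfolding standing_setting_def
  by (auto intro!: has_derivative_continuous_on)

lemma continuous_coord: "continuous_on X coord"
proof -
  have "continuous_on X (\<lambda>x. Dyc x y)"
    using standing y_in_Y unfolding standing_setting_def
    by (intro continuous_on_compose_Pair[of X "\<lambda>_. Y", OF _ continuous_on_id continuous_on_const]) auto
  then show ?thesis by (intro continuous_intros)
qed

lemma continuous_Dyx: "continuous_on X (\<lambda>x. Dyx x y)"
  using standing y_in_Y unfolding standing_setting_def
  by (intro continuous_on_compose_Pair[of X "\<lambda>_. Y", OF _ continuous_on_id continuous_on_const]) auto

lemma invertible_Dyx: "x \<in> X \<Longrightarrow> invertible (Dyx x y)"
  using standing y_in_Y transpose_invertible unfolding standing_setting_def by fastforce

lemma bounded_Dxc:
  obtains B where "B \<ge> 0" "\<And>x y'. x \<in> X \<Longrightarrow> y' \<in> Y \<Longrightarrow> norm (Dxc x y') \<le> B"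
proof -
  have "compact ((\<lambda>(x, y'). Dxc x y') ` (X \<times> Y))"
    using standing unfolding standing_setting_def
    by (intro compact_continuous_image compact_Times) auto
  then obtain B where "B > 0" "\<forall>v \<in> (\<lambda>(x, y'). Dxc x y') ` (X \<times> Y). norm v \<le> B"
    using compact_imp_bounded bounded_pos by metis
  then show ?thesis using that[of B] by auto
qed

lemma expc_in_X: "q \<in> Xy \<Longrightarrow> expc q \<in> X"
  unfolding cexp_def by (rule inv_into_into)

lemma coord_expc: "q \<in> Xy \<Longrightarrow> coord (expc q) = q"
  unfolding cexp_def by (metis (mono_tags, lifting) f_inv_into_f)

lemma expc_coord: "x \<in> X \<Longrightarrow> expc (coord x) = x"
  unfolding cexp_def using inj_coord by (metis (mono_tags, lifting) inv_into_f_f)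

lemma expc_image: "expc ` Xy = X"
  using expc_coord by force

lemma continuous_expc: "continuous_on Xy expc"
  by (rule continuous_on_inv[OF continuous_coord compact_X]) (simp add: expc_coord)

lemma inj_expc: "inj_on expc Xy"
  by (rule inj_on_inverseI[of _ coord]) (rule coord_expc)

lemma coord_interior: "coord ` interior X \<subseteq> interior Xy"
  by (rule image_interior_subset_interior_image[OF continuous_coord inj_coord])

lemma expc_interior: "expc ` interior Xy \<subseteq> interior X"
  using image_interior_subset_interior_image[OF continuous_expc inj_expc] by (simp add: expc_image)

lemma closure_interior_Xy: "closure (interior Xy) = Xy"
proof -
  have "interior Xy \<noteq> {}" using coord_interior interior_X_nonempty by blast
  moreover have "closed Xy"
    by (intro compact_imp_closed compact_continuous_image continuous_coord compact_X)
  ultimately show ?thesis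
    using convex_closure_interior[OF convex_Xy] closure_closed by auto
qed

lemma has_derivative_expc:
  assumes q: "q \<in> interior Xy"
  obtains B where "(expc has_derivative (\<lambda>u. - (B *v u))) (at q)" "Dyx (expc q) y ** B = mat 1"
proof -
  define x where "x = expc q"
  have "x \<in> interior X" using expc_interior q x_def by blast
  then have "x \<in> X" using interior_subset by blast
  have "coord x = q" using coord_expc q interior_subset x_def by blast
  obtain B where AB: "Dyx x y ** B = mat 1" and BA: "B ** Dyx x y = mat 1"
    using invertible_Dyx[OF \<open>x \<in> X\<close>] unfolding invertible_def by blast
  have "(coord has_derivative (\<lambda>v. - (Dyx x y *v v))) (at x)"
    using has_derivative_coord[OF \<open>x \<in> X\<close>] at_within_interior[OF \<open>x \<in> interior X\<close>] by simp
  moreover have "(\<lambda>u. - (B *v u)) \<circ> (\<lambda>v. - (Dyx x y *v v)) = id"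
    using BA by (auto simp: fun_eq_iff matrix_vector_mul_assoc vec.neg)
  ultimately have "(expc has_derivative (\<lambda>u. - (B *v u))) (at (coord x))"
    using q \<open>coord x = q\<close>
    by (intro has_derivative_inverse[OF compact_X \<open>x \<in> X\<close> _ continuous_coord])
      (auto simp: expc_coord intro: bounded_linear_minus)
  then show ?thesis using that AB \<open>coord x = q\<close> x_def by simp
qed

lemma has_derivative_c_expc_bounded:
  assumes q: "q \<in> interior Xy" and y': "y' \<in> Y"
    and "m > 0" and m: "\<And>x v. x \<in> X \<Longrightarrow> m * norm v \<le> norm (Dyx x y *v v)"
    and "B \<ge> 0" and B: "\<And>x. x \<in> X \<Longrightarrow> norm (Dxc x y') \<le> B"
  shows "\<exists>D. ((\<lambda>q. c (expc q) y') has_derivative D) (at q) \<and> onorm D \<le> B / m"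
proof -
  obtain M where dM: "(expc has_derivative (\<lambda>u. - (M *v u))) (at q)"
    and AM: "Dyx (expc q) y ** M = mat 1"
    using has_derivative_expc[OF q] .
  have "expc q \<in> interior X" using expc_interior q by blast
  then have x: "expc q \<in> X" using interior_subset by blast
  have "((\<lambda>x. c x y') has_derivative (\<lambda>v. Dxc (expc q) y' \<bullet> v)) (at (expc q))"
    using has_derivative_c[OF x y'] at_within_interior[OF \<open>expc q \<in> interior X\<close>] by simp
  from has_derivative_compose[OF dM this]
  have "((\<lambda>q. c (expc q) y') has_derivative (\<lambda>u. Dxc (expc q) y' \<bullet> - (M *v u))) (at q)" .
  moreover have "onorm (\<lambda>u. Dxc (expc q) y' \<bullet> - (M *v u)) \<le> B / m"
  proof (rule onorm_le)
    fix u
    have "m * norm (M *v u) \<le> norm u"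
      using m[OF x, of "M *v u"] AM by (simp add: matrix_vector_mul_assoc)
    then have "norm (M *v u) \<le> norm u / m" using \<open>m > 0\<close> by (simp add: field_simps)
    have "norm (Dxc (expc q) y' \<bullet> - (M *v u)) \<le> norm (Dxc (expc q) y') * norm (M *v u)"
      by (metis Cauchy_Schwarz_ineq2 norm_minus_cancel real_norm_def)
    also have "\<dots> \<le> B * (norm u / m)"
      using B[OF x] \<open>B \<ge> 0\<close> \<open>norm (M *v u) \<le> norm u / m\<close> by (intro mult_mono) auto
    finally show "norm (Dxc (expc q) y' \<bullet> - (M *v u)) \<le> B / m * norm u" by simp
  qed
  ultimately show ?thesis by blast
qed

lemma lipschitz_c_expc:
  obtains L where "\<And>y'. y' \<in> Y \<Longrightarrow> L-lipschitz_on Xy (\<lambda>q. c (expc q) y')"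
proof -
  obtain m where "m > 0" and m: "\<And>x v. x \<in> X \<Longrightarrow> m * norm v \<le> norm (Dyx x y *v v)"
    using invertible_matrices_bounded_below[OF compact_X continuous_Dyx invertible_Dyx] by blast
  obtain B where "B \<ge> 0" and B: "\<And>x y'. x \<in> X \<Longrightarrow> y' \<in> Y \<Longrightarrow> norm (Dxc x y') \<le> B"
    using bounded_Dxc by blast
  have "(B / m)-lipschitz_on Xy (\<lambda>q. c (expc q) y')" if y': "y' \<in> Y" for y'
  proof -
    have "\<forall>q \<in> interior Xy. \<exists>D. ((\<lambda>q. c (expc q) y') has_derivative D) (at q) \<and> onorm D \<le> B / m"
      using has_derivative_c_expc_bounded[OF _ y' \<open>m > 0\<close> m \<open>B \<ge> 0\<close> B[OF _ y']] by blast
    then obtain D where D: "\<forall>q \<in> interior Xy.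
        ((\<lambda>q. c (expc q) y') has_derivative D q) (at q) \<and> onorm (D q) \<le> B / m"
      by (auto dest!: bchoice)
    have "(B / m)-lipschitz_on (interior Xy) (\<lambda>q. c (expc q) y')"
      by (rule bounded_derivative_imp_lipschitz[where f' = D])
        (use D \<open>B \<ge> 0\<close> \<open>m > 0\<close> convex_Xy in \<open>auto intro: has_derivative_at_withinI\<close>)
    moreover have "continuous_on Xy (\<lambda>q. c (expc q) y')"
      using continuous_on_compose2[OF continuous_c_left[OF y'] continuous_expc] expc_in_X by blast
    ultimately show ?thesis
      using lipschitz_on_closure[of "B / m" "interior Xy"] by (simp add: closure_interior_Xy)
  qed
  then show ?thesis using that by blast
qed

lemma loeper_chart:
  assumes "loeper X Y c Dyc" "x0 \<in> X" "x1 \<in> X" "y' \<in> Y" "0 \<le> t" "t \<le> 1"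
    and "w = expc (t *\<^sub>R coord x1 + (1 - t) *\<^sub>R coord x0)"
  shows "- c w y' + c w y \<le> max (- c x0 y' + c x0 y) (- c x1 y' + c x1 y)"
proof -
  have "w \<in> c_segment X Dyc y x0 x1"
    using assms(5-7) unfolding c_segment_def by auto
  then show ?thesis
    using assms(1-4) y_in_Y unfolding loeper_def by blast
qed

lemma convex_coord_sublevel:
  assumes loeper: "loeper X Y c Dyc" and alt: "alt_c_convex X Y c \<phi>"
  shows "convex (coord ` {x \<in> X. \<phi> x \<le> - c x y + h})"
  unfolding convex_alt
proof (intro ballI allI impI)
  fix q0 q1 and t :: real
  assume "q0 \<in> coord ` {x \<in> X. \<phi> x \<le> - c x y + h}" "q1 \<in> coord ` {x \<in> X. \<phi> x \<le> - c x y + h}"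
    and t: "0 \<le> t \<and> t \<le> 1"
  then obtain x0 x1 where x0: "x0 \<in> X" "\<phi> x0 \<le> - c x0 y + h" "q0 = coord x0"
    and x1: "x1 \<in> X" "\<phi> x1 \<le> - c x1 y + h" "q1 = coord x1"
    by blast
  define w where "w = expc (t *\<^sub>R coord x1 + (1 - t) *\<^sub>R coord x0)"
  have "t *\<^sub>R coord x1 + (1 - t) *\<^sub>R coord x0 \<in> Xy"
    using convexD[OF convex_Xy, of "coord x1" "coord x0" t "1 - t"] x0 x1 t by auto
  then have w: "w \<in> X" "coord w = t *\<^sub>R coord x1 + (1 - t) *\<^sub>R coord x0"
    using expc_in_X coord_expc w_def by auto
  have "\<phi> w \<le> - c w y + h"
  proof (rule alt_c_convex_le[OF alt x0(1) x1(1) w(1)])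
    show "Y \<noteq> {}" using y_in_Y by blast
    fix y' assume "y' \<in> Y"
    from loeper_chart[OF loeper x0(1) x1(1) this _ _ w_def] t x0(2) x1(2)
    show "- c w y' + min (\<phi> x0 + c x0 y') (\<phi> x1 + c x1 y') \<le> - c w y + h"
      by linarith
  qed
  then show "(1 - t) *\<^sub>R q0 + t *\<^sub>R q1 \<in> coord ` {x \<in> X. \<phi> x \<le> - c x y + h}"
    using w x0(3) x1(3) by (auto simp: add.commute intro!: image_eqI[of _ _ w])
qed

lemma strict_sublevel_near:
  assumes alt: "alt_c_convex X Y c \<phi>" and x': "x' \<in> X" "\<phi> x' < - c x' y + h"
  obtains \<eta> where "\<eta> > 0"
    "\<And>q. q \<in> Xy \<Longrightarrow> dist q (coord x') < \<eta> \<Longrightarrow> \<phi> (expc q) < - c (expc q) y + h"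
proof -
  obtain L where L: "\<And>y'. y' \<in> Y \<Longrightarrow> L-lipschitz_on Xy (\<lambda>q. c (expc q) y')"
    using lipschitz_c_expc by blast
  have "L \<ge> 0" using L[OF y_in_Y] lipschitz_on_nonneg by blast
  define \<eta> where "\<eta> = (- c x' y + h - \<phi> x') / (2 * L + 1)"
  have "\<eta> > 0" and "2 * L * \<eta> < - c x' y + h - \<phi> x'"
    using x'(2) \<open>L \<ge> 0\<close> by (simp_all add: \<eta>_def field_simps)
  show ?thesis
  proof (rule that[OF \<open>\<eta> > 0\<close>])
    fix q assume q: "q \<in> Xy" "dist q (coord x') < \<eta>"
    have near: "\<bar>c (expc q) y' - c x' y'\<bar> \<le> L * \<eta>" if "y' \<in> Y" for y'
    proof -
      have "\<bar>c (expc q) y' - c x' y'\<bar> \<le> L * dist q (coord x')"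
        using lipschitz_onD[OF L[OF that] q(1), of "coord x'"] x' by (simp add: expc_coord dist_real_def)
      also have "\<dots> \<le> L * \<eta>" using q(2) \<open>L \<ge> 0\<close> by (simp add: mult_left_mono)
      finally show ?thesis .
    qed
    have "\<phi> (expc q) \<le> \<phi> x' + L * \<eta>"
    proof (rule alt_c_convex_le[OF alt x'(1) x'(1) expc_in_X[OF q(1)]])
      show "Y \<noteq> {}" using y_in_Y by blast
    qed (use near in fastforce)
    with near[OF y_in_Y] \<open>2 * L * \<eta> < - c x' y + h - \<phi> x'\<close>
    show "\<phi> (expc q) < - c (expc q) y + h" by linarith
  qed
qed

lemma open_strict_sublevel_chart:
  assumes alt: "alt_c_convex X Y c \<phi>" and x': "x' \<in> X" "\<phi> x' < - c x' y + h"
  obtains U where "open U" "U \<noteq> {}" "U \<subseteq> interior Xy"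
    "\<And>q. q \<in> U \<Longrightarrow> \<phi> (expc q) < - c (expc q) y + h"
proof -
  obtain \<eta> where "\<eta> > 0"
    and \<eta>: "\<And>q. q \<in> Xy \<Longrightarrow> dist q (coord x') < \<eta> \<Longrightarrow> \<phi> (expc q) < - c (expc q) y + h"
    using strict_sublevel_near[OF assms] by blast
  have "coord x' \<in> closure (interior Xy)" using x'(1) closure_interior_Xy by simp
  then obtain q where "q \<in> interior Xy" "dist q (coord x') < \<eta>"
    using closure_approachable \<open>\<eta> > 0\<close> by blast
  then show ?thesis
    using \<eta> interior_subset[of Xy]
    by (intro that[of "interior Xy \<inter> ball (coord x') \<eta>"]) (auto simp: dist_commute)
qed

lemma interior_sublevel_nonempty:
  assumes alt: "alt_c_convex X Y c \<phi>" and x': "x' \<in> X" "\<phi> x' < - c x' y + h"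
  shows "interior {x \<in> X. \<phi> x \<le> - c x y + h} \<noteq> {}"
proof -
  obtain U where U: "open U" "U \<noteq> {}" "U \<subseteq> interior Xy"
    and strict: "\<And>q. q \<in> U \<Longrightarrow> \<phi> (expc q) < - c (expc q) y + h"
    using open_strict_sublevel_chart[OF assms] by blast
  have "U \<subseteq> Xy" using U(3) interior_subset by blast
  then have "expc ` interior U \<subseteq> interior (expc ` U)"
    by (intro image_interior_subset_interior_image continuous_on_subset[OF continuous_expc]
        inj_on_subset[OF inj_expc])
  also have "\<dots> \<subseteq> interior {x \<in> X. \<phi> x \<le> - c x y + h}"
    using strict \<open>U \<subseteq> Xy\<close> expc_in_X by (intro interior_mono) force
  finally show ?thesis using U(1,2) interior_open by fastforce
qed

lemma alt_c_convex_supporting: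
  assumes alt: "alt_c_convex X Y c \<phi>" and "x0 \<in> X" "x1 \<in> X" "x \<in> X"
  obtains ys where "ys \<in> Y" "\<phi> x \<le> - c x ys + min (\<phi> x0 + c x0 ys) (\<phi> x1 + c x1 ys)"
proof -
  have "continuous_on Y (\<lambda>y'. - c x y' + min (\<phi> x0 + c x0 y') (\<phi> x1 + c x1 y'))"
    using continuous_c_right assms(2-4) by (intro continuous_intros) auto
  then obtain ys where "ys \<in> Y" and max: "\<And>y'. y' \<in> Y \<Longrightarrow>
      - c x y' + min (\<phi> x0 + c x0 y') (\<phi> x1 + c x1 y') \<le> - c x ys + min (\<phi> x0 + c x0 ys) (\<phi> x1 + c x1 ys)"
    using continuous_attains_sup[OF compact_Y] y_in_Y by blast
  moreover have "\<phi> x \<le> - c x ys + min (\<phi> x0 + c x0 ys) (\<phi> x1 + c x1 ys)"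
    by (rule alt_c_convex_le[OF assms]) (use max y_in_Y in auto)
  ultimately show ?thesis using that by blast
qed

lemma loeper_local_max:
  assumes loeper: "loeper X Y c Dyc" and "x \<in> X" "x2 \<in> X" "z \<in> X" "ys \<in> Y"
    and "coord x2 \<in> interior Xy" "0 < t" "t < 1"
    and x: "coord x = t *\<^sub>R coord x2 + (1 - t) *\<^sub>R coord z"
    and z_le: "- c z ys + c z y \<le> - c x ys + c x y"
    and x2_less: "- c x2 ys + c x2 y < - c x ys + c x y"
  obtains \<delta> where "\<delta> > 0" "\<And>w. w \<in> X \<Longrightarrow> dist w x < \<delta> \<Longrightarrow> - c w ys + c w y \<le> - c x ys + c x y"
proof -
  define G where "G w = - c w ys + c w y" for w
  have "continuous_on X G"
    unfolding G_def using continuous_c_left[OF \<open>ys \<in> Y\<close>] continuous_c_left[OF y_in_Y]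
    by (intro continuous_intros)
  then have "continuous_on Xy (\<lambda>q. G (expc q))"
    using continuous_on_compose2[OF _ continuous_expc] expc_in_X by blast
  then have "open (interior Xy \<inter> (\<lambda>q. G (expc q)) -` {..< G x})"
    by (intro continuous_open_preimage continuous_on_subset[OF _ interior_subset]) auto
  moreover have "coord x2 \<in> interior Xy \<inter> (\<lambda>q. G (expc q)) -` {..< G x}"
    using \<open>x2 \<in> X\<close> \<open>coord x2 \<in> interior Xy\<close> x2_less by (simp add: G_def expc_coord)
  ultimately obtain r where "r > 0" and r: "ball (coord x2) r \<subseteq> interior Xy \<inter> (\<lambda>q. G (expc q)) -` {..< G x}"
    by (meson open_contains_ball)
  obtain \<delta> where "\<delta> > 0" and \<delta>: "\<And>w. w \<in> X \<Longrightarrow> dist w x < \<delta> \<Longrightarrow> dist (coord w) (coord x) < t * r"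
    using continuous_coord[unfolded continuous_on_iff] \<open>x \<in> X\<close> \<open>r > 0\<close> \<open>0 < t\<close> by (metis mult_pos_pos)
  show ?thesis
  proof (rule that[OF \<open>\<delta> > 0\<close>])
    (* points near x lie on c-segments from z to points near x2, where G < G x *)
    fix w assume w: "w \<in> X" "dist w x < \<delta>"
    then have "coord w \<in> ball (coord x) (t * r)" using \<delta> by (simp add: dist_commute)
    then obtain a where a: "a \<in> ball (coord x2) r" "coord w = t *\<^sub>R a + (1 - t) *\<^sub>R coord z"
      using ball_subset_image_homothety[OF \<open>0 < t\<close>, of "coord x2" "coord z" r] x by auto
    have "a \<in> Xy" "G (expc a) < G x"
      using a(1) r interior_subset[of Xy] by auto
    have "w = expc (coord w)" using expc_coord[OF w(1)] by simp
    also have "\<dots> = expc (t *\<^sub>R coord (expc a) + (1 - t) *\<^sub>R coord z)"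
      using a(2) coord_expc[OF \<open>a \<in> Xy\<close>] by simp
    finally have "w = expc (t *\<^sub>R coord (expc a) + (1 - t) *\<^sub>R coord z)" .
    from loeper_chart[OF loeper \<open>z \<in> X\<close> expc_in_X[OF \<open>a \<in> Xy\<close>] \<open>ys \<in> Y\<close> _ _ this]
    have "G w \<le> max (G z) (G (expc a))"
      using \<open>0 < t\<close> \<open>t < 1\<close> by (simp add: G_def)
    then show "- c w ys + c w y \<le> - c x ys + c x y"
      using z_le \<open>G (expc a) < G x\<close> by (simp add: G_def)
  qed
qed

lemma local_max_c_difference_eq:
  assumes x_int: "x \<in> interior X" and "ys \<in> Y" "\<delta> > 0"
    and max: "\<And>w. w \<in> X \<Longrightarrow> dist w x < \<delta> \<Longrightarrow> - c w ys + c w y \<le> - c x ys + c x y"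
  shows "ys = y"
proof -
  obtain \<rho> where "\<rho> > 0" "ball x \<rho> \<subseteq> X" using x_int mem_interior by blast
  have x: "x \<in> X" using x_int interior_subset by blast
  have "((\<lambda>w. - c w ys + c w y) has_derivative (\<lambda>v. - (Dxc x ys \<bullet> v) + Dxc x y \<bullet> v)) (at x)"
    using has_derivative_add[OF has_derivative_minus[OF has_derivative_c[OF x \<open>ys \<in> Y\<close>]]
        has_derivative_c[OF x y_in_Y]]
    by (simp add: at_within_interior[OF x_int])
  moreover have "\<forall>w\<in>ball x (min \<delta> \<rho>). - c w ys + c w y \<le> - c x ys + c x y"
    using max \<open>ball x \<rho> \<subseteq> X\<close> by (force simp: dist_commute)
  ultimately have "(\<lambda>v. - (Dxc x ys \<bullet> v) + Dxc x y \<bullet> v) = (\<lambda>v. 0)"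
    using \<open>\<delta> > 0\<close> \<open>\<rho> > 0\<close> by (intro differential_zero_maxmin[of x "ball x (min \<delta> \<rho>)"]) auto
  then have "(Dxc x y - Dxc x ys) \<bullet> (Dxc x y - Dxc x ys) = 0"
    by (drule_tac fun_cong[of _ _ "Dxc x y - Dxc x ys"]) (simp add: inner_diff_left)
  then show "ys = y"
    using inj_onD[OF inj_Dxc[OF x] _ \<open>ys \<in> Y\<close> y_in_Y] by simp
qed

lemma interior_sublevel_strict:
  assumes loeper: "loeper X Y c Dyc" and alt: "alt_c_convex X Y c \<phi>"
    and x': "x' \<in> X" "\<phi> x' < - c x' y + h"
    and x: "x \<in> interior {x \<in> X. \<phi> x \<le> - c x y + h}"
  shows "\<phi> x < - c x y + h"
proof (rule ccontr)
  let ?S = "{x \<in> X. \<phi> x \<le> - c x y + h}"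
  assume "\<not> \<phi> x < - c x y + h"
  then have fx: "- c x y + h \<le> \<phi> x" by simp
  obtain U where "open U" "U \<noteq> {}" "U \<subseteq> interior Xy"
    and strict: "\<And>q. q \<in> U \<Longrightarrow> \<phi> (expc q) < - c (expc q) y + h"
    using open_strict_sublevel_chart[OF alt x'] by blast
  obtain q2 where "q2 \<in> U" using \<open>U \<noteq> {}\<close> by blast
  then have "q2 \<in> interior Xy" "q2 \<in> Xy"
    using \<open>U \<subseteq> interior Xy\<close> interior_subset by blast+
  define x2 where "x2 = expc q2"
  have x2: "x2 \<in> X" "coord x2 \<in> interior Xy" "\<phi> x2 < - c x2 y + h"
    using expc_in_X[OF \<open>q2 \<in> Xy\<close>] coord_expc[OF \<open>q2 \<in> Xy\<close>] \<open>q2 \<in> interior Xy\<close>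
      strict[OF \<open>q2 \<in> U\<close>]
    by (simp_all add: x2_def)
  have "x \<in> interior X" using x interior_mono[of ?S X] by blast
  then have "x \<in> X" using interior_subset by blast
  have "coord ` interior ?S \<subseteq> interior (coord ` ?S)"
    by (intro image_interior_subset_interior_image continuous_on_subset[OF continuous_coord]
        inj_on_subset[OF inj_coord]) auto
  then have "coord x \<in> interior (coord ` ?S)" using x by blast
  then obtain t qz where t: "0 < t" "t < 1"
    and "qz \<in> coord ` ?S" "coord x = t *\<^sub>R coord x2 + (1 - t) *\<^sub>R qz"
    by (rule interior_point_convex_combination)
  then obtain z where z: "z \<in> X" "\<phi> z \<le> - c z y + h"
    and comb: "coord x = t *\<^sub>R coord x2 + (1 - t) *\<^sub>R coord z"
    by blast
  obtain ys where "ys \<in> Y" and sup: "\<phi> x \<le> - c x ys + min (\<phi> x2 + c x2 ys) (\<phi> z + c z ys)"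
    using alt_c_convex_supporting[OF alt x2(1) z(1) \<open>x \<in> X\<close>] by blast
  have "- c z ys + c z y \<le> - c x ys + c x y" "- c x2 ys + c x2 y < - c x ys + c x y"
    using fx sup z(2) x2(3) min.cobounded1[of "\<phi> x2 + c x2 ys"] min.cobounded2[of _ "\<phi> z + c z ys"]
    by linarith+
  then obtain \<delta> where "\<delta> > 0" "\<And>w. w \<in> X \<Longrightarrow> dist w x < \<delta> \<Longrightarrow> - c w ys + c w y \<le> - c x ys + c x y"
    using loeper_local_max[OF loeper \<open>x \<in> X\<close> x2(1) z(1) \<open>ys \<in> Y\<close> x2(2) t comb] by blast
  then have "ys = y"
    using local_max_c_difference_eq[OF \<open>x \<in> interior X\<close> \<open>ys \<in> Y\<close>] by blast
  then have "\<phi> x \<le> - c x y + min (\<phi> x2 + c x2 y) (\<phi> z + c z y)"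
    using sup by simp
  then show False
    using fx x2(3) min.cobounded1[of "\<phi> x2 + c x2 y"] by linarith
qed

end

theorem lemma4p5:
  fixes X Y :: "(real^'n) set" and c :: "real^'n \<Rightarrow> real^'n \<Rightarrow> real"
    and Dxc Dyc :: "real^'n \<Rightarrow> real^'n \<Rightarrow> real^'n"
    and Dxy Dyx :: "real^'n \<Rightarrow> real^'n \<Rightarrow> real^'n^'n"
    and \<phi> :: "real^'n \<Rightarrow> real" and y :: "real^'n" and h :: real
  assumes "standing_setting X Y c Dxc Dyc Dxy Dyx"
    and "loeper X Y c Dyc"
    and "alt_c_convex X Y c \<phi>"
    and "y \<in> Y"
  shows "convex ((\<lambda>x. - Dyc x y) ` {x \<in> X. \<phi> x \<le> - c x y + h}) \<and>
         ((\<exists>x'\<in>X. \<phi> x' < - c x' y + h) \<longrightarrow>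
           interior {x \<in> X. \<phi> x \<le> - c x y + h} \<noteq> {} \<and>
           interior {x \<in> X. \<phi> x \<le> - c x y + h} \<subseteq> {x \<in> X. \<phi> x < - c x y + h})"
proof -
  interpret cost_chart X Y c Dxc Dyc Dxy Dyx y
    using assms(1,4) by unfold_locales
  have "interior {x \<in> X. \<phi> x \<le> - c x y + h} \<noteq> {}"
    "interior {x \<in> X. \<phi> x \<le> - c x y + h} \<subseteq> {x \<in> X. \<phi> x < - c x y + h}"
    if "x' \<in> X" "\<phi> x' < - c x' y + h" for x'
    using interior_sublevel_nonempty[OF assms(3) that]
      interior_sublevel_strict[OF assms(2,3) that] interior_subset by blast+
  then show ?thesis
    using convex_coord_sublevel[OF assms(2,3)] by blast
qed

end
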